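(* Assume the setting of the context. Fix $\widehat x^k$, $\delta_k>0$, points $x^1,\dots,x^{N_k}\in\mathcal{B}(\widehat x^k,\delta_k)$, realizations $\epsilon^1,\dots,\epsilon^{N_k}$ of $\tilde\epsilon$, and $\omega^i=\psi(x^i)+\epsilon^i$. Let $\widehat B^{k,1}\in\mathbb{R}^{n\times d}$, $\widehat B^{k,0}\in\mathbb{R}^{1\times d}$ be the least-squares coefficients, and let $$E_k:=\max_{z\in\mathcal{B}(\widehat x^k,\delta_k)}\big\|\psi(z)-(\widehat B^{k,1})^\top z-(\widehat B^{k,0})^\top\big\|.$$ For $x\in\mathcal{B}(\widehat x^k,\delta_k)$ define $y^{s,*}(x)=\arg\max_{y\in\mathcal{Y}}\frac1{N_k}\sum_{i}l(x,y,\psi(x)+\epsilon^i)$, $$\xi_k(x)=\frac1{N_k}\sum_{i}\nabla_y l(x,y^*(x),\psi(x)+\epsilon^i)-\mathbb{E}_{\tilde\epsilon}\big[\nabla_y l(x,y^*(x),\psi(x)+\tilde\epsilon)\big],$$ $$\tau_k(x)=\mathbb{E}_{\tilde\epsilon}\big[l(x,y^*(x),\psi(x)+\tilde\epsilon)\big]-\frac1{N_k}\sum_i l(x,y^*(x),\psi(x)+\epsilon^i).$$ Then for every $x\in\mathcal{B}(\widehat x^k,\delta_k)$: (a) $\|y^*(x)-y^{s,*}(x)\|\le\frac1\mu\|\xi_k(x)\|$; (b) $\|y^{k,*}(x)-y^{s,*}(x)\|\le\frac{2\ell_1}{\mu}E_k$; (c) $|\Phi(x)-\Phi^k(x)|\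le|\tau_k(x)|+\frac{L_1}{\mu}\|\xi_k(x)\|+2L_1\big(1+\frac{\ell_1}{\mu}\big)E_k$.
   Context: Standing assumptions: $l:\mathbb{R}^n\times\mathbb{R}^m\times\mathbb{R}^d\to\mathbb{R}$ is $\ell_1$-smooth (gradient $\ell_1$-Lipschitz) and $L_1$-Lipschitz; $\psi:\mathbb{R}^n\to\mathbb{R}^d$ is twice differentiable, $\ell_0$-smooth and $L_0$-Lipschitz; $\mathcal{Y}\subset\mathbb{R}^m$ is nonempty, closed, convex, bounded; $l(x,\cdot,z)$ is $\mu$-strongly concave on $\mathcal{Y}$ for all $(x,z)$; $\tilde\epsilon$ is a random vector in $\mathbb{R}^d$ with compact support and zero mean. $\mathcal{L}(x,y)=\mathbb{E}_{\tilde\epsilon}[l(x,y,\psi(x)+\tilde\epsilon)]$, $\Phi(x)=\max_{y\in\mathcal{Y}}\mathcal{L}(x,y)$, $y^*(x)=\arg\max_{y\in\mathcal{Y}}\mathcal{L}(x,y)$. $\mathcal{B}(x,\delta)=\{z:\|z-x\|\le\delta\}$. Least-squares coefficients: $(\widehat B^{k,0},\widehat B^{k,1})$ minimize $\sum_i\|\omega^i-(B^1)^\top x^i-(B^0)^\top\|^2$; residuals $e^{k,i}=\omega^i-(\widehat B^{k,1})^\top x^i-(\widehat B^{k,0})^\top$; $m_k(x,e)=(\widehat B^{k,1})^\top x+(\widehat B^{k,0})^\top+e$; $\mathcal{L}^k(x,y)=\frac1{N_k}\sum_i l(x,y,m_k(x,e^{k,i}))$; $\Phi^k(x)=\max_{y\in\mathcal{Y}}\mathcal{L}^k(x,y)$;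 $y^{k,*}(x)=\arg\max_{y\in\mathcal{Y}}\mathcal{L}^k(x,y)$. *)

theory Defs
  imports "HOL-Analysis.Analysis" "HOL-Probability.Probability"
begin

definition strongly_concave_on :: "real \<Rightarrow> 'a::real_normed_vector set \<Rightarrow> ('a \<Rightarrow> real) \<Rightarrow> bool" where
  "strongly_concave_on mu S f \<longleftrightarrow> convex S \<and>
     (\<forall>u\<in>S. \<forall>v\<in>S. \<forall>t::real. 0 \<le> t \<and> t \<le> 1 \<longrightarrow>
        t * f u + (1 - t) * f v + mu / 2 * t * (1 - t) * (norm (u - v))\<^sup>2 \<le> f (t *\<^sub>R u + (1 - t) *\<^sub>R v))"

text \<open>The (unique, when it exists) maximiser of f over S.\<close>
definition argmax_on :: "('a \<Rightarrow> real) \<Rightarrow> 'a set \<Rightarrow> 'a" where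
  "argmax_on f S = (THE y. y \<in> S \<and> (\<forall>y'\<in>S. f y' \<le> f y))"

definition max_on :: "('a \<Rightarrow> real) \<Rightarrow> 'a set \<Rightarrow> real" where
  "max_on f S = Sup (f ` S)"

definition calL :: "('d::euclidean_space) measure \<Rightarrow> ('n \<times> 'm \<times> 'd \<Rightarrow> real) \<Rightarrow> ('n \<Rightarrow> 'd) \<Rightarrow> 'n \<Rightarrow> 'm \<Rightarrow> real" where
  "calL P l psi x y = (\<integral>e. l (x, y, psi x + e) \<partial>P)"

definition PhiF :: "('d::euclidean_space) measure \<Rightarrow> ('n \<times> 'm \<times> 'd \<Rightarrow> real) \<Rightarrow> ('n \<Rightarrow> 'd) \<Rightarrow> 'm set \<Rightarrow> 'n \<Rightarrow> real" where
  "PhiF P l psi Y x = max_on (calL P l psi x) Y"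

definition ystar :: "('d::euclidean_space) measure \<Rightarrow> ('n \<times> 'm \<times> 'd \<Rightarrow> real) \<Rightarrow> ('n \<Rightarrow> 'd) \<Rightarrow> 'm set \<Rightarrow> 'n \<Rightarrow> 'm" where
  "ystar P l psi Y x = argmax_on (calL P l psi x) Y"

definition ls_obj :: "nat \<Rightarrow> (nat \<Rightarrow> real^'n) \<Rightarrow> (nat \<Rightarrow> real^'d) \<Rightarrow> real^'d \<Rightarrow> real^'d^'n \<Rightarrow> real" where
  "ls_obj N xs om B0 B1 = (\<Sum>i<N. (norm (om i - transpose B1 *v xs i - B0))\<^sup>2)"

definition resid :: "(nat \<Rightarrow> real^'n) \<Rightarrow> (nat \<Rightarrow> real^'d) \<Rightarrow> real^'d \<Rightarrow> real^'d^'n \<Rightarrow> nat \<Rightarrow> real^'d" where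
  "resid xs om B0 B1 i = om i - transpose B1 *v xs i - B0"

definition mk :: "real^'d \<Rightarrow> real^'d^'n \<Rightarrow> real^'n \<Rightarrow> real^'d \<Rightarrow> real^'d" where
  "mk B0 B1 x e = transpose B1 *v x + B0 + e"

definition calLk :: "nat \<Rightarrow> ((real^'n) \<times> 'm \<times> (real^'d) \<Rightarrow> real) \<Rightarrow> (nat \<Rightarrow> real^'n) \<Rightarrow> (nat \<Rightarrow> real^'d)
    \<Rightarrow> real^'d \<Rightarrow> real^'d^'n \<Rightarrow> real^'n \<Rightarrow> 'm \<Rightarrow> real" where
  "calLk N l xs om B0 B1 x y = (1 / real N) * (\<Sum>i<N. l (x, y, mk B0 B1 x (resid xs om B0 B1 i)))"

definition calLs :: "nat \<Rightarrow> ('n \<times> 'm \<times> 'd::real_normed_vector \<Rightarrow> real) \<Rightarrow> ('n \<Rightarrow> 'd) \<Rightarrow> (nat \<Rightarrow> 'd) \<Rightarrow> 'n \<Rightarrow> 'm \<Rightarrow> real" where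
  "calLs N l psi eps x y = (1 / real N) * (\<Sum>i<N. l (x, y, psi x + eps i))"

end

theory Submission
  imports Defs
begin

(* All three objectives -- the expected loss L(x,.), its sample average with the true psi and the
   surrogate L^k(x,.) -- are integrals y |-> \<integral> l(x, y, Z w) dM(w), where M is the noise distribution
   or the uniform distribution on the sample indices; as such they inherit from l mu-strong
   concavity, L1-Lipschitz continuity and a quadratic Taylor bound with constant ell1. If y maximises F
   and y' maximises a mu-strongly concave H, first-order optimality of y for F together with strong
   concavity of H gives mu |y' - y| <= |grad H(y) - grad F(y)|. This is (a) directly, and (b) because
   the surrogate sample points m_k(x, e^{k,i}) lie within 2 E_k of psi(x) + eps^i. Finally (c)
   telescopes max F - max H through the sample average at the three maximisers.
   Only the affine form of the model matters: the bounds hold for arbitrary (B0, B1). *)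

section \<open>Maximisers of strongly concave functions\<close>

lemma nonpos_if_le_linear:
  fixes c K :: real
  assumes "\<And>t. 0 < t \<Longrightarrow> t \<le> 1 \<Longrightarrow> c \<le> K * t"
  shows "c \<le> 0"
proof (rule ccontr)
  assume c: "\<not> c \<le> 0"
  define t where "t = min 1 (c / (2 * (\<bar>K\<bar> + 1)))"
  have t: "0 < t" "t \<le> 1" using c by (auto simp: t_def)
  have "K * t \<le> (\<bar>K\<bar> + 1) * t" using t by (intro mult_right_mono) auto
  also have "\<dots> \<le> (\<bar>K\<bar> + 1) * (c / (2 * (\<bar>K\<bar> + 1)))"
    by (intro mult_left_mono) (auto simp: t_def)
  also have "\<dots> = c / 2" by (simp add: field_simps)
  finally show False using assms[OF t] c by linarith
qed

lemma convex_mem_segment: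
  assumes "convex Y" "y \<in> Y" "y' \<in> Y" "0 \<le> t" "t \<le> 1"
  shows "y + t *\<^sub>R (y' - y) \<in> Y"
proof -
  have "y + t *\<^sub>R (y' - y) = (1 - t) *\<^sub>R y + t *\<^sub>R y'" by (simp add: algebra_simps)
  then show ?thesis using convexD[OF assms(1-3), of "1 - t" t] assms(4,5) by simp
qed

lemma strongly_concave_on_segmentD:
  assumes "strongly_concave_on mu Y H" "y \<in> Y" "y' \<in> Y" "0 \<le> t" "t \<le> 1"
  shows "(1 - t) * H y + t * H y' + mu / 2 * t * (1 - t) * (norm (y' - y))\<^sup>2 \<le> H (y + t *\<^sub>R (y' - y))"
proof -
  have "t * H y' + (1 - t) * H y + mu / 2 * t * (1 - t) * (norm (y' - y))\<^sup>2
      \<le> H (t *\<^sub>R y' + (1 - t) *\<^sub>R y)"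
    using assms unfolding strongly_concave_on_def by blast
  moreover have "y + t *\<^sub>R (y' - y) = t *\<^sub>R y' + (1 - t) *\<^sub>R y" by (simp add: algebra_simps)
  ultimately show ?thesis by simp
qed

lemma strongly_concave_quadratic_growth:
  assumes sc: "strongly_concave_on mu Y H" and "y \<in> Y" "y' \<in> Y"
    and max: "\<And>z. z \<in> Y \<Longrightarrow> H z \<le> H y'"
  shows "H y + mu / 2 * (norm (y - y'))\<^sup>2 \<le> H y'"
proof -
  have cvx: "convex Y" using sc by (simp add: strongly_concave_on_def)
  have "H y - H y' + mu / 2 * (norm (y - y'))\<^sup>2 \<le> 0"
  proof (rule nonpos_if_le_linear)
    fix t :: real assume t: "0 < t" "t \<le> 1"
    have "(1 - t) * H y' + t * H y + mu / 2 * t * (1 - t) * (norm (y - y'))\<^sup>2 \<le> H y'"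
      using strongly_concave_on_segmentD[OF sc \<open>y' \<in> Y\<close> \<open>y \<in> Y\<close>, of t]
        max[OF convex_mem_segment[OF cvx \<open>y' \<in> Y\<close> \<open>y \<in> Y\<close>, of t]] t by simp
    moreover have "t * (H y - H y' + mu / 2 * (norm (y - y'))\<^sup>2) - t * (mu / 2 * (norm (y - y'))\<^sup>2 * t)
        = (1 - t) * H y' + t * H y + mu / 2 * t * (1 - t) * (norm (y - y'))\<^sup>2 - H y'"
      by (simp add: field_simps)
    ultimately have "t * (H y - H y' + mu / 2 * (norm (y - y'))\<^sup>2) \<le> t * (mu / 2 * (norm (y - y'))\<^sup>2 * t)"
      by linarith
    then show "H y - H y' + mu / 2 * (norm (y - y'))\<^sup>2 \<le> mu / 2 * (norm (y - y'))\<^sup>2 * t"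
      using t by simp
  qed
  then show ?thesis by simp
qed

lemma argmax_on_strongly_concave:
  fixes F :: "'a::real_normed_vector \<Rightarrow> real"
  assumes "compact Y" "Y \<noteq> {}" "continuous_on Y F" "strongly_concave_on mu Y F" "mu > 0"
  shows "argmax_on F Y \<in> Y" "\<And>z. z \<in> Y \<Longrightarrow> F z \<le> F (argmax_on F Y)"
proof -
  obtain y where y: "y \<in> Y" "\<forall>z\<in>Y. F z \<le> F y"
    using continuous_attains_sup[OF assms(1-3)] by blast
  have unique: "z = y" if z: "z \<in> Y" "\<forall>z'\<in>Y. F z' \<le> F z" for z
  proof -
    have "F z + mu / 2 * (norm (z - y))\<^sup>2 \<le> F y"
      using strongly_concave_quadratic_growth[OF assms(4) z(1) y(1)] y by blast
    moreover have "F y \<le> F z" using z(2) y(1) by blast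
    ultimately have "mu / 2 * (norm (z - y))\<^sup>2 \<le> 0" by linarith
    moreover have "mu / 2 > 0" using \<open>mu > 0\<close> by simp
    ultimately have "(norm (z - y))\<^sup>2 \<le> 0" by (meson mult_pos_pos not_le)
    then show ?thesis by simp
  qed
  have "argmax_on F Y = y"
    unfolding argmax_on_def by (rule the_equality) (use y unique in blast)+
  then show "argmax_on F Y \<in> Y" "\<And>z. z \<in> Y \<Longrightarrow> F z \<le> F (argmax_on F Y)"
    using y by simp_all
qed

lemma max_on_eqI:
  assumes "y \<in> Y" "\<And>z. z \<in> Y \<Longrightarrow> F z \<le> F y"
  shows "max_on F Y = F y"
  unfolding max_on_def using assms by (intro cSup_eq_maximum) auto

lemma first_order_optimality:
  fixes F :: "'a::real_inner \<Rightarrow> real"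
  assumes "convex Y" "y \<in> Y" "y' \<in> Y" and max: "\<And>z. z \<in> Y \<Longrightarrow> F z \<le> F y"
    and expansion: "\<And>t. 0 < t \<Longrightarrow> t \<le> 1 \<Longrightarrow>
      t * (g \<bullet> (y' - y)) - C * t\<^sup>2 \<le> F (y + t *\<^sub>R (y' - y)) - F y"
  shows "g \<bullet> (y' - y) \<le> 0"
proof (rule nonpos_if_le_linear)
  fix t :: real assume t: "0 < t" "t \<le> 1"
  have "t * (g \<bullet> (y' - y)) - C * t\<^sup>2 \<le> 0"
    using expansion[OF t] max[OF convex_mem_segment[OF assms(1-3), of t]] t by simp
  then have "t * (g \<bullet> (y' - y)) \<le> t * (C * t)" by (simp add: power2_eq_square mult_ac)
  then show "g \<bullet> (y' - y) \<le> C * t" using t by simp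
qed

lemma strongly_concave_gradient_ineq:
  fixes H :: "'a::real_inner \<Rightarrow> real"
  assumes sc: "strongly_concave_on mu Y H" and "y \<in> Y" "y' \<in> Y"
    and expansion: "\<And>t. 0 < t \<Longrightarrow> t \<le> 1 \<Longrightarrow>
      H (y + t *\<^sub>R (y' - y)) - H y - t * (g \<bullet> (y' - y)) \<le> C * t\<^sup>2"
  shows "H y' - H y + mu / 2 * (norm (y' - y))\<^sup>2 \<le> g \<bullet> (y' - y)"
proof -
  have "H y' - H y + mu / 2 * (norm (y' - y))\<^sup>2 - g \<bullet> (y' - y) \<le> 0"
  proof (rule nonpos_if_le_linear)
    fix t :: real assume t: "0 < t" "t \<le> 1"
    have "(1 - t) * H y + t * H y' + mu / 2 * t * (1 - t) * (norm (y' - y))\<^sup>2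
        \<le> H y + t * (g \<bullet> (y' - y)) + C * t\<^sup>2"
      using strongly_concave_on_segmentD[OF sc \<open>y \<in> Y\<close> \<open>y' \<in> Y\<close>, of t] expansion[OF t] t by simp
    moreover have "t * (H y' - H y + mu / 2 * (norm (y' - y))\<^sup>2 - g \<bullet> (y' - y))
          - t * ((C + mu / 2 * (norm (y' - y))\<^sup>2) * t)
        = (1 - t) * H y + t * H y' + mu / 2 * t * (1 - t) * (norm (y' - y))\<^sup>2
          - (H y + t * (g \<bullet> (y' - y)) + C * t\<^sup>2)"
      by (simp add: field_simps power2_eq_square)
    ultimately have "t * (H y' - H y + mu / 2 * (norm (y' - y))\<^sup>2 - g \<bullet> (y' - y))
        \<le> t * ((C + mu / 2 * (norm (y' - y))\<^sup>2) * t)"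
      by linarith
    then show "H y' - H y + mu / 2 * (norm (y' - y))\<^sup>2 - g \<bullet> (y' - y)
        \<le> (C + mu / 2 * (norm (y' - y))\<^sup>2) * t"
      using t by simp
  qed
  then show ?thesis by simp
qed

lemma strongly_concave_argmax_dist_le:
  fixes F H :: "'a::real_inner \<Rightarrow> real"
  assumes sc: "strongly_concave_on mu Y H" and "y \<in> Y" "y' \<in> Y"
    and max_F: "\<And>z. z \<in> Y \<Longrightarrow> F z \<le> F y" and max_H: "\<And>z. z \<in> Y \<Longrightarrow> H z \<le> H y'"
    and expansion_F: "\<And>t. 0 < t \<Longrightarrow> t \<le> 1 \<Longrightarrow>
      \<bar>F (y + t *\<^sub>R (y' - y)) - F y - t * (gF \<bullet> (y' - y))\<bar> \<le> C * t\<^sup>2"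
    and expansion_H: "\<And>t. 0 < t \<Longrightarrow> t \<le> 1 \<Longrightarrow>
      \<bar>H (y + t *\<^sub>R (y' - y)) - H y - t * (gH \<bullet> (y' - y))\<bar> \<le> C * t\<^sup>2"
  shows "mu * norm (y' - y) \<le> norm (gH - gF)"
proof -
  have "convex Y" using sc by (simp add: strongly_concave_on_def)
  have "gF \<bullet> (y' - y) \<le> 0"
  proof (rule first_order_optimality[where F = F and C = C, OF \<open>convex Y\<close> \<open>y \<in> Y\<close> \<open>y' \<in> Y\<close> max_F])
    fix t :: real assume "0 < t" "t \<le> 1"
    then show "t * (gF \<bullet> (y' - y)) - C * t\<^sup>2 \<le> F (y + t *\<^sub>R (y' - y)) - F y"
      using expansion_F[OF \<open>0 < t\<close> \<open>t \<le> 1\<close>] by (simp add: abs_le_iff)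
  qed
  moreover have "H y' - H y + mu / 2 * (norm (y' - y))\<^sup>2 \<le> gH \<bullet> (y' - y)"
  proof (rule strongly_concave_gradient_ineq[where C = C, OF sc \<open>y \<in> Y\<close> \<open>y' \<in> Y\<close>])
    fix t :: real assume "0 < t" "t \<le> 1"
    then show "H (y + t *\<^sub>R (y' - y)) - H y - t * (gH \<bullet> (y' - y)) \<le> C * t\<^sup>2"
      using expansion_H[OF \<open>0 < t\<close> \<open>t \<le> 1\<close>] by (simp add: abs_le_iff)
  qed
  moreover have "H y + mu / 2 * (norm (y' - y))\<^sup>2 \<le> H y'"
    using strongly_concave_quadratic_growth[OF sc \<open>y \<in> Y\<close> \<open>y' \<in> Y\<close> max_H]
    by (simp add: norm_minus_commute)
  ultimately have "mu * (norm (y' - y))\<^sup>2 \<le> (gH - gF) \<bullet> (y' - y)"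
    by (simp add: inner_diff_left)
  also have "\<dots> \<le> norm (gH - gF) * norm (y' - y)" by (rule norm_cauchy_schwarz)
  finally have "(mu * norm (y' - y)) * norm (y' - y) \<le> norm (gH - gF) * norm (y' - y)"
    by (simp add: power2_eq_square mult.assoc)
  then show ?thesis
    using mult_right_le_imp_le[of "mu * norm (y' - y)" "norm (y' - y)" "norm (gH - gF)"]
    by (cases "y' = y") auto
qed

lemma gradient_lipschitz_taylor_bound:
  fixes f :: "'a::real_inner \<Rightarrow> real"
  assumes grad: "\<And>p. GDERIV f p :> g p" and lip: "C-lipschitz_on UNIV g"
  shows "\<bar>f (p + v) - f p - g p \<bullet> v\<bar> \<le> C * (norm v)\<^sup>2"
proof -
  have line: "((\<lambda>t. p + t *\<^sub>R v) has_derivative (\<lambda>h. h *\<^sub>R v)) (at t within {0..1})" for t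
    by (auto intro!: derivative_eq_intros)
  have "((\<lambda>t. f (p + t *\<^sub>R v)) has_derivative (\<lambda>h. (h *\<^sub>R v) \<bullet> g (p + t *\<^sub>R v))) (at t within {0..1})"
    for t :: real
    using has_derivative_compose[OF line grad[unfolded gderiv_def]] .
  then obtain s where s: "s \<in> {0..1}" "f (p + v) - f p = v \<bullet> g (p + s *\<^sub>R v)"
    using mvt_very_simple[of 0 1 "\<lambda>t. f (p + t *\<^sub>R v)"] by force
  have "\<bar>f (p + v) - f p - g p \<bullet> v\<bar> = \<bar>v \<bullet> (g (p + s *\<^sub>R v) - g p)\<bar>"
    using s by (simp add: inner_diff_right inner_commute)
  also have "\<dots> \<le> norm v * norm (g (p + s *\<^sub>R v) - g p)" by (rule Cauchy_Schwarz_ineq2)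
  also have "\<dots> \<le> norm v * (C * norm v)"
  proof (rule mult_left_mono)
    have "norm (g (p + s *\<^sub>R v) - g p) \<le> C * norm (s *\<^sub>R v)"
      using lipschitz_on_normD[OF lip, of "p + s *\<^sub>R v" p] by simp
    also have "\<dots> \<le> C * norm v"
      using s lipschitz_on_nonneg[OF lip] by (simp add: mult_left_mono mult_left_le_one_le)
    finally show "norm (g (p + s *\<^sub>R v) - g p) \<le> C * norm v" .
  qed simp
  finally show ?thesis by (simp add: power2_eq_square mult_ac)
qed

section \<open>Integrals against probability measures\<close>

lemma (in prob_space) norm_integral_le_const:
  fixes g :: "'a \<Rightarrow> 'b::{banach, second_countable_topology}"
  assumes "integrable M g" "AE w in M. norm (g w) \<le> c"
  shows "norm (integral\<^sup>L M g) \<le> c"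
proof -
  have "norm (integral\<^sup>L M g) \<le> (\<integral>w. norm (g w) \<partial>M)" by (rule integral_norm_bound)
  also have "\<dots> \<le> c" by (rule integral_le_const) (use assms in auto)
  finally show ?thesis .
qed

lemma (in prob_space) integral_lipschitz_perturbation_le:
  fixes f :: "'c::metric_space \<Rightarrow> 'b::{banach, second_countable_topology}"
  assumes "K-lipschitz_on UNIV f" "integrable M (\<lambda>w. f (Z w))" "integrable M (\<lambda>w. f (Z' w))"
    and "AE w in M. dist (Z w) (Z' w) \<le> c"
  shows "norm ((\<integral>w. f (Z w) \<partial>M) - (\<integral>w. f (Z' w) \<partial>M)) \<le> K * c"
proof -
  have "AE w in M. norm (f (Z w) - f (Z' w)) \<le> K * c"
    using assms(4)
  proof eventually_elim
    case (elim w)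
    have "norm (f (Z w) - f (Z' w)) \<le> K * dist (Z w) (Z' w)"
      using lipschitz_onD[OF assms(1)] by (simp add: dist_norm)
    also have "\<dots> \<le> K * c" using elim lipschitz_on_nonneg[OF assms(1)] by (rule mult_left_mono)
    finally show ?case .
  qed
  then show ?thesis
    using norm_integral_le_const[of "\<lambda>w. f (Z w) - f (Z' w)"] assms(2,3) by simp
qed

lemma set_pmf_uniform_lessThan: "0 < (N::nat) \<Longrightarrow> set_pmf (pmf_of_set {..<N}) = {..<N}"
  by (subst set_pmf_of_set) auto

lemma integral_uniform_lessThan:
  fixes f :: "nat \<Rightarrow> 'b::{banach, second_countable_topology}" and N :: nat
  assumes "0 < N"
  shows "(\<integral>i. f i \<partial>measure_pmf (pmf_of_set {..<N})) = (1 / real N) *\<^sub>R (\<Sum>i<N. f i)"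
proof -
  have "(\<integral>i. f i \<partial>measure_pmf (pmf_of_set {..<N})) = (\<Sum>i<N. pmf (pmf_of_set {..<N}) i *\<^sub>R f i)"
    by (rule integral_measure_pmf) (use assms set_pmf_uniform_lessThan in auto)
  also have "\<dots> = (\<Sum>i<N. (1 / real N) *\<^sub>R f i)"
    using assms by (intro sum.cong) (auto simp: pmf_of_set lessThan_empty_iff)
  finally show ?thesis by (simp add: scaleR_sum_right)
qed

lemma integrable_uniform_lessThan:
  fixes f :: "nat \<Rightarrow> 'b::{banach, second_countable_topology}"
  shows "0 < N \<Longrightarrow> integrable (measure_pmf (pmf_of_set {..<N})) f"
  by (rule integrable_measure_pmf_finite) (simp add: set_pmf_uniform_lessThan)

lemma AE_uniform_lessThan:
  "0 < (N::nat) \<Longrightarrow> (\<And>i. i < N \<Longrightarrow> Q i) \<Longrightarrow> AE i in measure_pmf (pmf_of_set {..<N}). Q i"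
  by (simp add: AE_measure_pmf_iff set_pmf_uniform_lessThan)

lemma integrable_lipschitz_shift:
  fixes h :: "'d::euclidean_space \<Rightarrow> 'b::{banach, second_countable_topology}"
  assumes "prob_space P" "sets P = sets borel" "integrable P (\<lambda>e. e)" and lip: "K-lipschitz_on UNIV h"
  shows "integrable P (\<lambda>e. h (c + e))"
proof (rule Bochner_Integration.integrable_bound)
  show "integrable P (\<lambda>e. norm (h c) + K * norm e)"
    using assms(1,3) by (auto intro!: prob_space.finite_measure finite_measure.integrable_const)
  have "continuous_on UNIV (\<lambda>e. h (c + e))"
    by (rule continuous_on_compose2[OF lipschitz_on_continuous_on[OF lip]])
      (simp_all add: continuous_on_add continuous_on_const continuous_on_id)
  then show "(\<lambda>e. h (c + e)) \<in> borel_measurable P"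
    using measurable_cong_sets[OF assms(2) refl] borel_measurable_continuous_onI by blast
  show "AE e in P. norm (h (c + e)) \<le> norm (norm (h c) + K * norm e)"
  proof (rule AE_I2)
    fix e
    have "norm (h (c + e) - h c) \<le> K * norm e"
      using lipschitz_on_normD[OF lip, of "c + e" c] by simp
    then show "norm (h (c + e)) \<le> norm (norm (h c) + K * norm e)"
      using norm_triangle_sub[of "h (c + e)" "h c"] lipschitz_on_nonneg[OF lip] by simp
  qed
qed

lemma lipschitz_on_slice_thd:
  assumes "L-lipschitz_on UNIV f"
  shows "L-lipschitz_on UNIV (\<lambda>z. f (x, y, z))"
proof (rule lipschitz_onI)
  show "dist (f (x, y, z)) (f (x, y, z')) \<le> L * dist z z'" for z z'
    using lipschitz_onD[OF assms, of "(x, y, z)" "(x, y, z')"] by (simp add: dist_prod_def)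
qed (rule lipschitz_on_nonneg[OF assms])

lemma lipschitz_on_fst_snd:
  fixes g :: "'p::metric_space \<Rightarrow> 'a::real_normed_vector \<times> 'b::real_normed_vector \<times> 'c::real_normed_vector"
  assumes "L-lipschitz_on UNIV g"
  shows "L-lipschitz_on UNIV (\<lambda>p. fst (snd (g p)))"
proof (rule lipschitz_onI)
  fix p q
  have "norm (fst (snd (g p - g q))) \<le> norm (g p - g q)"
    by (metis norm_fst_le norm_snd_le order_trans prod.collapse)
  then show "dist (fst (snd (g p))) (fst (snd (g q))) \<le> L * dist p q"
    using lipschitz_onD[OF assms, of p q] by (simp add: dist_norm)
qed (rule lipschitz_on_nonneg[OF assms])

section \<open>Expected losses\<close>

locale strongly_concave_loss =
  fixes l :: "'a::real_inner \<times> 'b::euclidean_space \<times> 'c::euclidean_space \<Rightarrow> real"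
    and gl :: "'a \<times> 'b \<times> 'c \<Rightarrow> 'a \<times> 'b \<times> 'c"
    and Y :: "'b set"
    and ell1 L1 mu :: real
  assumes gradient: "\<And>p. GDERIV l p :> gl p"
    and gradient_lipschitz: "ell1-lipschitz_on UNIV gl"
    and lipschitz: "L1-lipschitz_on UNIV l"
    and strongly_concave: "\<And>x z. strongly_concave_on mu Y (\<lambda>y. l (x, y, z))"
    and compact_Y: "compact Y"
    and Y_nonempty: "Y \<noteq> {}"
    and mu_pos: "0 < mu"
begin

definition grad_y :: "'a \<times> 'b \<times> 'c \<Rightarrow> 'b" where
  "grad_y p = fst (snd (gl p))"

definition risk :: "'w measure \<Rightarrow> 'a \<Rightarrow> ('w \<Rightarrow> 'c) \<Rightarrow> 'b \<Rightarrow> real" where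
  "risk M x Z y = (\<integral>w. l (x, y, Z w) \<partial>M)"

definition risk_grad :: "'w measure \<Rightarrow> 'a \<Rightarrow> ('w \<Rightarrow> 'c) \<Rightarrow> 'b \<Rightarrow> 'b" where
  "risk_grad M x Z y = (\<integral>w. grad_y (x, y, Z w) \<partial>M)"

definition admissible_sample :: "'w measure \<Rightarrow> 'a \<Rightarrow> ('w \<Rightarrow> 'c) \<Rightarrow> bool" where
  "admissible_sample M x Z \<longleftrightarrow> prob_space M \<and>
     (\<forall>y. integrable M (\<lambda>w. l (x, y, Z w))) \<and> (\<forall>y. integrable M (\<lambda>w. grad_y (x, y, Z w)))"

lemma grad_y_lipschitz: "ell1-lipschitz_on UNIV grad_y"
  unfolding grad_y_def by (rule lipschitz_on_fst_snd[OF gradient_lipschitz])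

lemma admissible_sample_uniform:
  "0 < (N::nat) \<Longrightarrow> admissible_sample (measure_pmf (pmf_of_set {..<N})) x Z"
  by (simp add: admissible_sample_def prob_space_measure_pmf integrable_uniform_lessThan)

lemma admissible_sample_shift:
  assumes "prob_space P" "sets P = sets borel" "integrable P (\<lambda>e. e)"
  shows "admissible_sample P x (\<lambda>e. c + e)"
  using assms integrable_lipschitz_shift[OF assms lipschitz_on_slice_thd[OF lipschitz]]
    integrable_lipschitz_shift[OF assms lipschitz_on_slice_thd[OF grad_y_lipschitz]]
  by (simp add: admissible_sample_def)

lemma risk_uniform:
  "0 < (N::nat) \<Longrightarrow> risk (measure_pmf (pmf_of_set {..<N})) x Z y = (1 / real N) * (\<Sum>i<N. l (x, y, Z i))"
  by (simp add: risk_def integral_uniform_lessThan)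

lemma risk_grad_uniform:
  "0 < (N::nat) \<Longrightarrow> risk_grad (measure_pmf (pmf_of_set {..<N})) x Z y
     = (1 / real N) *\<^sub>R (\<Sum>i<N. grad_y (x, y, Z i))"
  by (simp add: risk_grad_def integral_uniform_lessThan)

context
  fixes M :: "'w measure" and x :: 'a and Z :: "'w \<Rightarrow> 'c"
  assumes admissible: "admissible_sample M x Z"
begin

interpretation prob_space M
  using admissible by (simp add: admissible_sample_def)

lemma integrable_loss: "integrable M (\<lambda>w. l (x, y, Z w))"
  and integrable_grad_y: "integrable M (\<lambda>w. grad_y (x, y, Z w))"
  using admissible by (simp_all add: admissible_sample_def)

lemma risk_strongly_concave: "strongly_concave_on mu Y (risk M x Z)"
  unfolding strongly_concave_on_def
proof (intro conjI ballI allI impI)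
  show "convex Y" using strongly_concave by (simp add: strongly_concave_on_def)
  fix u v and t :: real assume "u \<in> Y" "v \<in> Y" "0 \<le> t \<and> t \<le> 1"
  define c where "c = mu / 2 * t * (1 - t) * (norm (u - v))\<^sup>2"
  have "t * risk M x Z u + (1 - t) * risk M x Z v + c
      = (\<integral>w. t * l (x, u, Z w) + (1 - t) * l (x, v, Z w) + c \<partial>M)"
    by (simp add: risk_def integrable_loss prob_space)
  also have "\<dots> \<le> risk M x Z (t *\<^sub>R u + (1 - t) *\<^sub>R v)"
    unfolding risk_def
  proof (rule integral_mono)
    fix w
    show "t * l (x, u, Z w) + (1 - t) * l (x, v, Z w) + c \<le> l (x, t *\<^sub>R u + (1 - t) *\<^sub>R v, Z w)"
      using strongly_concave[of x "Z w"] \<open>u \<in> Y\<close> \<open>v \<in> Y\<close> \<open>0 \<le> t \<and> t \<le> 1\<close>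
      unfolding strongly_concave_on_def c_def by blast
  qed (simp_all add: integrable_loss)
  finally show "t * risk M x Z u + (1 - t) * risk M x Z v + mu / 2 * t * (1 - t) * (norm (u - v))\<^sup>2
      \<le> risk M x Z (t *\<^sub>R u + (1 - t) *\<^sub>R v)"
    unfolding c_def .
qed

lemma risk_lipschitz: "L1-lipschitz_on UNIV (risk M x Z)"
proof (rule lipschitz_onI)
  fix y y'
  have "norm ((\<integral>w. l (x, y, Z w) \<partial>M) - (\<integral>w. l (x, y', Z w) \<partial>M)) \<le> L1 * dist y y'"
    by (rule integral_lipschitz_perturbation_le[OF lipschitz integrable_loss integrable_loss])
      (simp add: dist_prod_def)
  then show "dist (risk M x Z y) (risk M x Z y') \<le> L1 * dist y y'"
    by (simp add: risk_def dist_norm)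
qed (rule lipschitz_on_nonneg[OF lipschitz])

lemma risk_taylor_bound:
  "\<bar>risk M x Z (y + t *\<^sub>R d) - risk M x Z y - t * (risk_grad M x Z y \<bullet> d)\<bar> \<le> ell1 * (norm d)\<^sup>2 * t\<^sup>2"
proof -
  have pointwise: "\<bar>l (x, y + t *\<^sub>R d, Z w) - l (x, y, Z w) - t * (grad_y (x, y, Z w) \<bullet> d)\<bar>
      \<le> ell1 * (norm d)\<^sup>2 * t\<^sup>2" for w
    using gradient_lipschitz_taylor_bound[OF gradient gradient_lipschitz, of "(x, y, Z w)" "(0, t *\<^sub>R d, 0)"]
    by (simp add: grad_y_def inner_prod_def norm_Pair power_mult_distrib mult_ac)
  have "risk M x Z (y + t *\<^sub>R d) - risk M x Z y - t * (risk_grad M x Z y \<bullet> d)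
      = (\<integral>w. l (x, y + t *\<^sub>R d, Z w) - l (x, y, Z w) - t * (grad_y (x, y, Z w) \<bullet> d) \<partial>M)"
    by (simp add: risk_def risk_grad_def integrable_loss integrable_grad_y)
  also have "norm \<dots> \<le> ell1 * (norm d)\<^sup>2 * t\<^sup>2"
    by (rule norm_integral_le_const) (auto intro!: AE_I2 pointwise simp: integrable_loss integrable_grad_y)
  finally show ?thesis by simp
qed

lemma argmax_risk:
  shows "argmax_on (risk M x Z) Y \<in> Y"
    and "\<And>y. y \<in> Y \<Longrightarrow> risk M x Z y \<le> risk M x Z (argmax_on (risk M x Z) Y)"
  using argmax_on_strongly_concave[OF compact_Y Y_nonempty
      continuous_on_subset[OF lipschitz_on_continuous_on[OF risk_lipschitz]] risk_strongly_concave mu_pos]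
  by auto

lemma max_on_risk: "max_on (risk M x Z) Y = risk M x Z (argmax_on (risk M x Z) Y)"
  by (rule max_on_eqI) (use argmax_risk in auto)

end

lemma argmax_risk_dist_le:
  assumes "admissible_sample M x Z" "admissible_sample M' x Z'"
  defines "y \<equiv> argmax_on (risk M x Z) Y" and "y' \<equiv> argmax_on (risk M' x Z') Y"
  shows "mu * norm (y' - y) \<le> norm (risk_grad M' x Z' y - risk_grad M x Z y)"
  unfolding y_def y'_def
  by (rule strongly_concave_argmax_dist_le[OF risk_strongly_concave[OF assms(2)]
        argmax_risk(1)[OF assms(1)] argmax_risk(1)[OF assms(2)]
        argmax_risk(2)[OF assms(1)] argmax_risk(2)[OF assms(2)]
        risk_taylor_bound[OF assms(1)] risk_taylor_bound[OF assms(2)]])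

lemma risk_perturbation_le:
  assumes "admissible_sample M x Z" "admissible_sample M x Z'" "AE w in M. dist (Z w) (Z' w) \<le> c"
  shows "\<bar>risk M x Z y - risk M x Z' y\<bar> \<le> L1 * c"
  using prob_space.integral_lipschitz_perturbation_le[OF _ lipschitz
      integrable_loss[OF assms(1)] integrable_loss[OF assms(2)]] assms
  by (simp add: risk_def admissible_sample_def dist_prod_def)

lemma risk_grad_perturbation_le:
  assumes "admissible_sample M x Z" "admissible_sample M x Z'" "AE w in M. dist (Z w) (Z' w) \<le> c"
  shows "norm (risk_grad M x Z y - risk_grad M x Z' y) \<le> ell1 * c"
  using prob_space.integral_lipschitz_perturbation_le[OF _ grad_y_lipschitz
      integrable_grad_y[OF assms(1)] integrable_grad_y[OF assms(2)]] assms
  by (simp add: risk_grad_def admissible_sample_def dist_prod_def)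

lemma max_risk_diff_le:
  assumes "admissible_sample M x Z" "admissible_sample M' x Z'" "admissible_sample M' x Z''"
    and "AE w in M'. dist (Z' w) (Z'' w) \<le> c"
  defines "y \<equiv> argmax_on (risk M x Z) Y" and "y' \<equiv> argmax_on (risk M' x Z') Y"
    and "y'' \<equiv> argmax_on (risk M' x Z'') Y"
  shows "\<bar>max_on (risk M x Z) Y - max_on (risk M' x Z'') Y\<bar>
    \<le> \<bar>risk M x Z y - risk M' x Z' y\<bar> + L1 * norm (y - y') + L1 * norm (y'' - y') + L1 * c"
proof -
  have "\<bar>risk M' x Z' y - risk M' x Z' y'\<bar> \<le> L1 * norm (y - y')"
    and "\<bar>risk M' x Z' y' - risk M' x Z' y''\<bar> \<le> L1 * norm (y'' - y')"
    using lipschitz_on_normD[OF risk_lipschitz[OF assms(2)]] by (auto simp: norm_minus_commute)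
  moreover have "\<bar>risk M' x Z' y'' - risk M' x Z'' y''\<bar> \<le> L1 * c"
    by (rule risk_perturbation_le[OF assms(2-4)])
  ultimately show ?thesis
    unfolding y_def y'_def y''_def max_on_risk[OF assms(1)] max_on_risk[OF assms(3)] by linarith
qed

lemma maximiser_stability:
  assumes "admissible_sample M x Z" "admissible_sample M' x Z'" "admissible_sample M' x Z''"
    and "AE w in M'. dist (Z' w) (Z'' w) \<le> c"
  defines "y \<equiv> argmax_on (risk M x Z) Y" and "y' \<equiv> argmax_on (risk M' x Z') Y"
    and "y'' \<equiv> argmax_on (risk M' x Z'') Y"
    and "xi \<equiv> risk_grad M' x Z' (argmax_on (risk M x Z) Y) - risk_grad M x Z (argmax_on (risk M x Z) Y)"
    and "tau \<equiv> risk M x Z (argmax_on (risk M x Z) Y) - risk M' x Z' (argmax_on (risk M x Z) Y)"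
  shows "norm (y - y') \<le> (1 / mu) * norm xi"
    and "norm (y'' - y') \<le> (ell1 / mu) * c"
    and "\<bar>max_on (risk M x Z) Y - max_on (risk M' x Z'') Y\<bar>
      \<le> \<bar>tau\<bar> + (L1 / mu) * norm xi + L1 * (1 + ell1 / mu) * c"
proof -
  have "mu * norm (y' - y) \<le> norm xi"
    unfolding y_def y'_def xi_def by (rule argmax_risk_dist_le[OF assms(1,2)])
  then show a: "norm (y - y') \<le> (1 / mu) * norm xi"
    using mu_pos by (simp add: norm_minus_commute field_simps)
  have "mu * norm (y'' - y') \<le> norm (risk_grad M' x Z'' y' - risk_grad M' x Z' y')"
    unfolding y'_def y''_def by (rule argmax_risk_dist_le[OF assms(2,3)])
  also have "\<dots> \<le> ell1 * c"
    using risk_grad_perturbation_le[OF assms(2-4)] by (simp add: norm_minus_commute)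
  finally show b: "norm (y'' - y') \<le> (ell1 / mu) * c"
    using mu_pos by (simp add: field_simps)
  have L1: "0 \<le> L1" by (rule lipschitz_on_nonneg[OF lipschitz])
  have "\<bar>max_on (risk M x Z) Y - max_on (risk M' x Z'') Y\<bar>
      \<le> \<bar>tau\<bar> + L1 * norm (y - y') + L1 * norm (y'' - y') + L1 * c"
    unfolding tau_def y_def y'_def y''_def by (rule max_risk_diff_le[OF assms(1-4)])
  also have "\<dots> \<le> \<bar>tau\<bar> + L1 * ((1 / mu) * norm xi) + L1 * ((ell1 / mu) * c) + L1 * c"
    using mult_left_mono[OF a L1] mult_left_mono[OF b L1] by linarith
  also have "\<dots> = \<bar>tau\<bar> + (L1 / mu) * norm xi + L1 * (1 + ell1 / mu) * c"
    by (simp add: algebra_simps)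
  finally show "\<bar>max_on (risk M x Z) Y - max_on (risk M' x Z'') Y\<bar>
      \<le> \<bar>tau\<bar> + (L1 / mu) * norm xi + L1 * (1 + ell1 / mu) * c" .
qed

end

section \<open>The affine surrogate model\<close>

lemma affine_model_error_le_Sup:
  fixes psi :: "real^'n \<Rightarrow> real^'d"
  assumes "continuous_on K psi" "compact K" "z \<in> K"
  shows "norm (psi z - transpose A *v z - b) \<le> Sup ((\<lambda>z. norm (psi z - transpose A *v z - b)) ` K)"
proof (rule cSup_upper)
  have "continuous_on K (\<lambda>z. norm (psi z - transpose A *v z - b))"
    by (intro continuous_intros assms(1))
  then show "bdd_above ((\<lambda>z. norm (psi z - transpose A *v z - b)) ` K)"
    using assms(2) by (intro bounded_imp_bdd_above compact_imp_bounded compact_continuous_image)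
qed (use assms(3) in simp)

lemma affine_model_sample_dist_le:
  fixes psi :: "real^'n \<Rightarrow> real^'d"
  assumes "continuous_on K psi" "compact K" "x \<in> K" "xs i \<in> K"
  shows "dist (psi x + eps i) (mk B0 B1 x (resid xs (\<lambda>i. psi (xs i) + eps i) B0 B1 i))
    \<le> 2 * Sup ((\<lambda>z. norm (psi z - transpose B1 *v z - B0)) ` K)"
proof -
  have "dist (psi x + eps i) (mk B0 B1 x (resid xs (\<lambda>i. psi (xs i) + eps i) B0 B1 i))
      = norm ((psi x - transpose B1 *v x - B0) - (psi (xs i) - transpose B1 *v xs i - B0))"
    by (simp add: dist_norm mk_def resid_def algebra_simps)
  also have "\<dots> \<le> norm (psi x - transpose B1 *v x - B0) + norm (psi (xs i) - transpose B1 *v xs i - B0)"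
    by (rule norm_triangle_ineq4)
  finally show ?thesis
    using affine_model_error_le_Sup[where A = B1 and b = B0, OF assms(1,2,3)]
      affine_model_error_le_Sup[where A = B1 and b = B0, OF assms(1,2,4)] by linarith
qed

theorem mainTheorem5:
  fixes l :: "(real^'n) \<times> (real^'m) \<times> (real^'d) \<Rightarrow> real"
    and gl :: "(real^'n) \<times> (real^'m) \<times> (real^'d) \<Rightarrow> (real^'n) \<times> (real^'m) \<times> (real^'d)"
    and psi :: "real^'n \<Rightarrow> real^'d"
    and Dpsi :: "real^'n \<Rightarrow> ((real^'n) \<Rightarrow>\<^sub>L (real^'d))"
    and Y :: "(real^'m) set"
    and P :: "(real^'d) measure"
    and ell1 L1 ell0 L0 mu delta :: real
    and xhat :: "real^'n"
    and N :: nat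
    and xs :: "nat \<Rightarrow> real^'n"
    and eps :: "nat \<Rightarrow> real^'d"
    and B0 :: "real^'d" and B1 :: "real^'d^'n"
    and x :: "real^'n"
  assumes l_grad: "\<And>p. GDERIV l p :> gl p"
    and l_smooth: "ell1-lipschitz_on UNIV gl"
    and l_lip: "L1-lipschitz_on UNIV l"
    and psi_deriv: "\<And>z. (psi has_derivative blinfun_apply (Dpsi z)) (at z)"
    and psi_twice: "\<And>z. Dpsi differentiable (at z)"
    and psi_smooth: "ell0-lipschitz_on UNIV Dpsi"
    and psi_lip: "L0-lipschitz_on UNIV psi"
    and Y_ne: "Y \<noteq> {}" and Y_closed: "closed Y" and Y_convex: "convex Y" and Y_bounded: "bounded Y"
    and mu_pos: "mu > 0"
    and strong_conc: "\<And>x z. strongly_concave_on mu Y (\<lambda>y. l (x, y, z))"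
    and P_prob: "prob_space P"
    and P_sets: "sets P = sets borel"
    and P_compact_support: "\<exists>K. compact K \<and> K \<in> sets P \<and> emeasure P K = 1"
    and P_integrable: "integrable P (\<lambda>e. e)"
    and P_mean: "(\<integral>e. e \<partial>P) = 0"
    and delta_pos: "delta > 0"
    and N_pos: "N > 0"
    and xs_ball: "\<And>i. i < N \<Longrightarrow> xs i \<in> cball xhat delta"
    and least_squares: "\<And>B0' B1'. ls_obj N xs (\<lambda>i. psi (xs i) + eps i) B0 B1
                                   \<le> ls_obj N xs (\<lambda>i. psi (xs i) + eps i) B0' B1'"
    and x_ball: "x \<in> cball xhat delta"
  shows
    "let om = (\<lambda>i. psi (xs i) + eps i);
         Ek = Sup ((\<lambda>z. norm (psi z - transpose B1 *v z - B0)) ` cball xhat delta);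
         ys = ystar P l psi Y x;
         yss = argmax_on (calLs N l psi eps x) Y;
         yks = argmax_on (calLk N l xs om B0 B1 x) Y;
         gy = (\<lambda>p. fst (snd (gl p)));
         xi = (1 / real N) *\<^sub>R (\<Sum>i<N. gy (x, ys, psi x + eps i))
              - (\<integral>e. gy (x, ys, psi x + e) \<partial>P);
         tau = (\<integral>e. l (x, ys, psi x + e) \<partial>P) - (1 / real N) * (\<Sum>i<N. l (x, ys, psi x + eps i))
     in norm (ys - yss) \<le> (1 / mu) * norm xi
      \<and> norm (yks - yss) \<le> (2 * ell1 / mu) * Ek
      \<and> \<bar>PhiF P l psi Y x - max_on (calLk N l xs om B0 B1 x) Y\<bar>
          \<le> \<bar>tau\<bar> + (L1 / mu) * norm xi + 2 * L1 * (1 + ell1 / mu) * Ek"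
proof -
  interpret strongly_concave_loss l gl Y ell1 L1 mu
    using l_grad l_smooth l_lip strong_conc Y_ne mu_pos Y_closed Y_bounded
    by unfold_locales (auto simp: compact_eq_bounded_closed)
  define U where "U = measure_pmf (pmf_of_set {..<N})"
  define Ek where "Ek = Sup ((\<lambda>z. norm (psi z - transpose B1 *v z - B0)) ` cball xhat delta)"
  define Zs where "Zs = (\<lambda>i. psi x + eps i)"
  define Zk where "Zk = (\<lambda>i. mk B0 B1 x (resid xs (\<lambda>i. psi (xs i) + eps i) B0 B1 i))"
  have admissible: "admissible_sample P x (\<lambda>e. psi x + e)"
      "admissible_sample U x Zs" "admissible_sample U x Zk"
    using admissible_sample_shift[OF P_prob P_sets P_integrable] admissible_sample_uniform[OF N_pos]
    by (simp_all add: U_def)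
  have "AE i in U. dist (Zs i) (Zk i) \<le> 2 * Ek"
    unfolding U_def Zs_def Zk_def Ek_def
    using affine_model_sample_dist_le[where xs = xs, OF continuous_on_subset[OF
        lipschitz_on_continuous_on[OF psi_lip] subset_UNIV] compact_cball x_ball xs_ball]
    by (intro AE_uniform_lessThan[OF N_pos]) simp
  note stability = maximiser_stability[OF admissible this]
  have objectives: "calL P l psi x = risk P x (\<lambda>e. psi x + e)"
      "calLs N l psi eps x = risk U x Zs" "calLk N l xs (\<lambda>i. psi (xs i) + eps i) B0 B1 x = risk U x Zk"
    by (simp_all add: fun_eq_iff calL_def risk_def calLs_def calLk_def U_def Zs_def Zk_def
        risk_uniform[OF N_pos, unfolded risk_def])
  have averages: "\<And>y. (1 / real N) * (\<Sum>i<N. l (x, y, psi x + eps i)) = risk U x Zs y"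
      "\<And>y. (1 / real N) *\<^sub>R (\<Sum>i<N. fst (snd (gl (x, y, psi x + eps i)))) = risk_grad U x Zs y"
    by (simp_all add: risk_uniform[OF N_pos] risk_grad_uniform[OF N_pos] U_def Zs_def grad_y_def)
  have expectations: "\<And>y. (\<integral>e. l (x, y, psi x + e) \<partial>P) = risk P x (\<lambda>e. psi x + e) y"
      "\<And>y. (\<integral>e. fst (snd (gl (x, y, psi x + e))) \<partial>P) = risk_grad P x (\<lambda>e. psi x + e) y"
    by (simp_all add: risk_def risk_grad_def grad_y_def)
  have rescale: "(ell1 / mu) * (2 * Ek) = (2 * ell1 / mu) * Ek"
      "L1 * (1 + ell1 / mu) * (2 * Ek) = 2 * L1 * (1 + ell1 / mu) * Ek"
    by simp_all
  show ?thesis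
    unfolding Let_def PhiF_def ystar_def objectives averages expectations Ek_def[symmetric]
    using stability unfolding rescale by blast
qed

end
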